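(* As formal power series in $x$, $$\sum_{n\ge 0}\left\langle {n \atop 3}\right\rangle_{\!3}x^n=\frac{x^2-7x^3+39x^4-336x^5+1844x^6-5545x^7+9697x^8-10404x^9+7532x^{10}-4558x^{11}+2435x^{12}-700x^{13}}{(1-x)^4(1-2x)^3(1-5x+5x^2)^2(1-10x+27x^2-20x^3)}.$$
   Context: A $c$-rook placement on an $n\times n$ board is a placement of $cn$ rooks on the cells, several rooks being allowed in the same cell, such that every row and every column contains exactly $c$ rooks (equivalently, an $n\times n$ matrix of nonnegative integers with all row and column sums equal to $c$). A drop is a rook lying strictly below the main diagonal, i.e.\ in a cell $(i,j)$ (row $i$, column $j$) with $i>j$, counted with multiplicity. The generalized Eulerian number $\left\langle {n \atop k}\right\rangle_{\!c}$ is the number of $c$-rook placements on the $n\times n$ board with exactly $k$ drops; for $n=0$ (empty board, only zero drops possible) $\left\langle {0 \atop k}\right\rangle_{\!c}=0$ when $k\ge1$. *)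

theory Defs
  imports "HOL-Computational_Algebra.Formal_Power_Series"
begin

definition rook_placements :: "nat \<Rightarrow> nat \<Rightarrow> (nat \<Rightarrow> nat \<Rightarrow> nat) set" where
  "rook_placements c n = {M. (\<forall>i j. (n \<le> i \<or> n \<le> j) \<longrightarrow> M i j = 0)
      \<and> (\<forall>i<n. (\<Sum>j<n. M i j) = c) \<and> (\<forall>j<n. (\<Sum>i<n. M i j) = c)}"

definition drops :: "nat \<Rightarrow> (nat \<Rightarrow> nat \<Rightarrow> nat) \<Rightarrow> nat" where
  "drops n M = (\<Sum>i<n. \<Sum>j<i. M i j)"

definition gen_eulerian :: "nat \<Rightarrow> nat \<Rightarrow> nat \<Rightarrow> nat" where
  "gen_eulerian c n k = card {M \<in> rook_placements c n. drops n M = k}"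

end

theory Submission
  imports Defs "HOL-Computational_Algebra.Polynomial_FPS" "HOL-Library.Equipollence"
begin

text \<open>Count the placements by peeling off the first row and column of the board. What remains is
  a smaller board bordered by extra rows and columns with residual quotas: the rest of the peeled
  row becomes an extra row, the rest of the peeled column an extra column whose rooks are exactly
  the drops in that column. Up to discarding zero quotas, only 31 border states are reachable from
  the empty border with three drops to spend, so the counts obey a transfer-matrix recursion on
  these states. A computation shows that the denominator annihilates the first fifteen count
  vectors; by linearity it then annihilates all of them, and the first fourteen terms of the
  product of the denominator with the generating function give the numerator.\<close>

type_synonym matrix = "nat \<Rightarrow> nat \<Rightarrow> nat"
type_synonym state = "nat list \<times> nat list \<times> nat"

definition border :: "nat \<Rightarrow> nat list \<Rightarrow> matrix set" where
  "border m a = {R. (\<forall>p t. length a \<le> p \<or> m \<le> t \<longrightarrow> R p t = 0) \<and>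
     (\<forall>p<length a. (\<Sum>t<m. R p t) = a ! p)}"

definition border_sum :: "nat list \<Rightarrow> matrix \<Rightarrow> nat \<Rightarrow> nat" where
  "border_sum a R t = (\<Sum>p<length a. R p t)"

text \<open>\<open>R p t\<close> counts the rooks of the extra row \<open>p\<close> (quota \<open>a ! p\<close>) in column \<open>t\<close>, and \<open>C q i\<close>
  those of the extra column \<open>q\<close> (quota \<open>b ! q\<close>) in row \<open>i\<close>.\<close>
fun bordered_placements :: "nat \<Rightarrow> nat \<Rightarrow> state \<Rightarrow> (matrix \<times> matrix \<times> matrix) set" where
  "bordered_placements c m (a, b, j) = {(M, R, C).
     (\<forall>i t. m \<le> i \<or> m \<le> t \<longrightarrow> M i t = 0) \<and> R \<in> border m a \<and> C \<in> border m b \<and>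
     (\<forall>t<m. border_sum a R t + (\<Sum>i<m. M i t) = c) \<and>
     (\<forall>i<m. border_sum b C i + (\<Sum>t<m. M i t) = c) \<and> drops m M = j}"

lemma border_Nil: "border m [] = {\<lambda>_ _. 0}"
  by (auto simp: border_def fun_eq_iff)

lemma card_bordered_placements_Nil:
  "card (bordered_placements c n ([], [], j)) = gen_eulerian c n j"
proof -
  have "bordered_placements c n ([], [], j) =
      (\<lambda>M. (M, \<lambda>_ _. 0, \<lambda>_ _. 0)) ` {M \<in> rook_placements c n. drops n M = j}"
    by (auto simp: border_Nil border_sum_def rook_placements_def)
  then show ?thesis
    by (simp add: gen_eulerian_def card_image inj_on_def)
qed

definition border_equiv :: "nat \<Rightarrow> nat list \<Rightarrow> nat list \<Rightarrow> bool" where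
  "border_equiv m a a' \<longleftrightarrow> (\<exists>h. bij_betw h (border m a) (border m a') \<and>
     (\<forall>R\<in>border m a. border_sum a' (h R) = border_sum a R))"

lemma border_equiv_refl: "border_equiv m a a"
  unfolding border_equiv_def by (metis bij_betw_id id_apply)

lemma border_equiv_trans: "border_equiv m a a' \<Longrightarrow> border_equiv m a' a'' \<Longrightarrow> border_equiv m a a''"
  unfolding border_equiv_def by (metis (no_types, lifting) bij_betw_apply bij_betw_trans comp_apply)

lemma sum_lessThan_Suc_remove:
  "k \<le> n \<Longrightarrow> (\<Sum>p<Suc n. f p) = f k + (\<Sum>p<n. f (if p < k then p else Suc p))"
proof (induction n)
  case (Suc n)
  then show ?case
    by (cases "k = Suc n") (auto simp: add_ac)
qed simp

lemma border_zero_quota: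
  assumes "R \<in> border m a" and "a ! p = 0"
  shows "R p t = 0"
proof (cases "p < length a \<and> t < m")
  case True
  with assms have "(\<Sum>t<m. R p t) = 0"
    unfolding border_def by simp
  with True show ?thesis
    by simp
next
  case False
  with assms(1) show ?thesis
    unfolding border_def by auto
qed

definition delete_row :: "nat \<Rightarrow> matrix \<Rightarrow> matrix" where
  "delete_row k R p = R (if p < k then p else Suc p)"

definition insert_zero_row :: "nat \<Rightarrow> matrix \<Rightarrow> matrix" where
  "insert_zero_row k R p t = (if p < k then R p t else if p = k then 0 else R (p - 1) t)"

lemma delete_row_mem_border:
  assumes "R \<in> border m (xs @ v # ys)"
  shows "delete_row (length xs) R \<in> border m (xs @ ys)"
proof -
  have "(xs @ ys) ! p = (xs @ v # ys) ! (if p < length xs then p else Suc p)" for p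
    by (simp add: nth_append)
  with assms show ?thesis
    unfolding border_def delete_row_def by auto
qed

lemma insert_zero_row_mem_border:
  assumes R: "R \<in> border m (xs @ ys)"
  shows "insert_zero_row (length xs) R \<in> border m (xs @ 0 # ys)"
proof -
  let ?k = "length xs"
  have "(\<Sum>t<m. insert_zero_row ?k R p t) = (xs @ 0 # ys) ! p" if "p < length (xs @ 0 # ys)" for p
  proof -
    consider "p < ?k" | "p = ?k" | "?k < p"
      by linarith
    then show ?thesis
    proof cases
      case 1
      with R that show ?thesis
        unfolding border_def by (auto simp: insert_zero_row_def nth_append)
    next
      case 2
      then show ?thesis
        by (simp add: insert_zero_row_def)
    next
      case 3
      with R that show ?thesis
        unfolding border_def by (auto simp: insert_zero_row_def nth_append nth_Cons')
    qed
  qed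
  moreover have "insert_zero_row ?k R p t = 0" if "length (xs @ 0 # ys) \<le> p \<or> m \<le> t" for p t
    using R that unfolding border_def insert_zero_row_def by auto
  ultimately show ?thesis
    unfolding border_def by blast
qed

lemma border_sum_delete_row:
  assumes "R \<in> border m (xs @ 0 # ys)"
  shows "border_sum (xs @ ys) (delete_row (length xs) R) = border_sum (xs @ 0 # ys) R"
proof
  fix t
  have "R (length xs) t = 0"
    using border_zero_quota[OF assms] by simp
  then show "border_sum (xs @ ys) (delete_row (length xs) R) t = border_sum (xs @ 0 # ys) R t"
    using sum_lessThan_Suc_remove[of "length xs" "length (xs @ ys)" "\<lambda>p. R p t"]
    by (simp add: border_sum_def delete_row_def)
qed

lemma border_equiv_remove_zero: "border_equiv m (xs @ 0 # ys) (xs @ ys)"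
proof -
  let ?k = "length xs"
  have "bij_betw (delete_row ?k) (border m (xs @ 0 # ys)) (border m (xs @ ys))"
  proof (rule bij_betw_byWitness[where f' = "insert_zero_row ?k"])
    show "\<forall>R\<in>border m (xs @ 0 # ys). insert_zero_row ?k (delete_row ?k R) = R"
      using border_zero_quota[where p = ?k]
      by (auto simp: delete_row_def insert_zero_row_def fun_eq_iff)
    show "\<forall>R\<in>border m (xs @ ys). delete_row ?k (insert_zero_row ?k R) = R"
      by (auto simp: delete_row_def insert_zero_row_def fun_eq_iff)
    show "delete_row ?k ` border m (xs @ 0 # ys) \<subseteq> border m (xs @ ys)"
      using delete_row_mem_border by blast
    show "insert_zero_row ?k ` border m (xs @ ys) \<subseteq> border m (xs @ 0 # ys)"
      using insert_zero_row_mem_border by blast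
  qed
  then show ?thesis
    unfolding border_equiv_def using border_sum_delete_row by blast
qed

lemma border_equiv_removeAll_zero: "border_equiv m a (removeAll 0 a)"
proof (induction "length a" arbitrary: a rule: less_induct)
  case less
  show ?case
  proof (cases "0 \<in> set a")
    case True
    then obtain xs ys where a: "a = xs @ 0 # ys"
      by (meson split_list)
    then have "length (xs @ ys) < length a"
      by simp
    then have "border_equiv m (xs @ ys) (removeAll 0 (xs @ ys))"
      by (rule less)
    with a show ?thesis
      using border_equiv_remove_zero border_equiv_trans by fastforce
  qed (simp add: border_equiv_refl)
qed

lemma bordered_placements_eqpoll:
  assumes "border_equiv m a a'" and "border_equiv m b b'"
  shows "bordered_placements c m (a, b, j) \<approx> bordered_placements c m (a', b', j)"
proof -
  obtain h where h: "bij_betw h (border m a) (border m a')"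
    and h_sum: "\<And>R. R \<in> border m a \<Longrightarrow> border_sum a' (h R) = border_sum a R"
    using assms(1) unfolding border_equiv_def by blast
  obtain g where g: "bij_betw g (border m b) (border m b')"
    and g_sum: "\<And>C. C \<in> border m b \<Longrightarrow> border_sum b' (g C) = border_sum b C"
    using assms(2) unfolding border_equiv_def by blast
  let ?F = "map_prod id (map_prod h g)"
  have bij: "bij_betw ?F (UNIV \<times> border m a \<times> border m b) (UNIV \<times> border m a' \<times> border m b')"
    by (intro bij_betw_map_prod bij_betw_id h g)
  have image: "?F ` bordered_placements c m (a, b, j) = bordered_placements c m (a', b', j)"
  proof
    show "?F ` bordered_placements c m (a, b, j) \<subseteq> bordered_placements c m (a', b', j)"
    proof (rule image_subsetI)
      fix x
      assume "x \<in> bordered_placements c m (a, b, j)"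
      moreover obtain M R C where "x = (M, R, C)"
        by (cases x)
      ultimately show "?F x \<in> bordered_placements c m (a', b', j)"
        using bij_betw_apply[OF h] bij_betw_apply[OF g] h_sum g_sum by simp
    qed
    show "bordered_placements c m (a', b', j) \<subseteq> ?F ` bordered_placements c m (a, b, j)"
    proof
      fix y
      assume in': "y \<in> bordered_placements c m (a', b', j)"
      then have "y \<in> UNIV \<times> border m a' \<times> border m b'"
        by (cases y) simp
      then have "y \<in> ?F ` (UNIV \<times> border m a \<times> border m b)"
        unfolding bij_betw_imp_surj_on[OF bij] .
      then obtain M R C where RC: "R \<in> border m a" "C \<in> border m b" "y = (M, h R, g C)"
        by (auto simp: map_prod_def)
      with in' h_sum g_sum have "(M, R, C) \<in> bordered_placements c m (a, b, j)"
        by simp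
      with RC show "y \<in> ?F ` bordered_placements c m (a, b, j)"
        by (intro image_eqI[where x = "(M, R, C)"]) simp_all
    qed
  qed
  have "bordered_placements c m (a, b, j) \<subseteq> UNIV \<times> border m a \<times> border m b"
    by auto
  from bij_betw_subset[OF bij this image] show ?thesis
    unfolding eqpoll_def by blast
qed

definition drop_zero_quotas :: "state \<Rightarrow> state" where
  "drop_zero_quotas = (\<lambda>(a, b, j). (removeAll 0 a, removeAll 0 b, j))"

lemma bordered_placements_drop_zero_quotas:
  "bordered_placements c m s \<approx> bordered_placements c m (drop_zero_quotas s)"
proof -
  obtain a b j where "s = (a, b, j)"
    by (cases s)
  then show ?thesis
    using bordered_placements_eqpoll[OF border_equiv_removeAll_zero border_equiv_removeAll_zero]
    by (simp add: drop_zero_quotas_def del: bordered_placements.simps)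
qed

subsection \<open>Peeling off the first row and column\<close>

text \<open>A choice \<open>(x, y, d)\<close> fixes the rooks of the extra rows in column 0, those of the extra
  columns in row 0, and \<open>M 0 0\<close>. The rest of row 0 then becomes a new extra row and the rest of
  column 0 a new extra column, whose rooks are exactly the drops in column 0.\<close>
fun peel_choices :: "nat \<Rightarrow> state \<Rightarrow> (nat list \<times> nat list \<times> nat) set" where
  "peel_choices c (a, b, j) = {(x, y, d). list_all2 (\<le>) x a \<and> list_all2 (\<le>) y b \<and>
     sum_list x + d \<le> c \<and> sum_list y + d \<le> c \<and> c - d - sum_list x \<le> j}"

fun peeled :: "nat \<Rightarrow> state \<Rightarrow> nat list \<times> nat list \<times> nat \<Rightarrow> state" where
  "peeled c (a, b, j) (x, y, d) =
     (map2 (-) a x @ [c - d - sum_list y], map2 (-) b y @ [c - d - sum_list x],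
      j - (c - d - sum_list x))"

fun peel :: "nat \<Rightarrow> nat \<Rightarrow> matrix \<times> matrix \<times> matrix \<Rightarrow>
    (nat list \<times> nat list \<times> nat) \<times> matrix \<times> matrix \<times> matrix" where
  "peel k l (M, R, C) =
     ((map (\<lambda>p. R p 0) [0..<k], map (\<lambda>q. C q 0) [0..<l], M 0 0),
      (\<lambda>i t. M (Suc i) (Suc t),
       \<lambda>p t. if p < k then R p (Suc t) else if p = k then M 0 (Suc t) else 0,
       \<lambda>q i. if q < l then C q (Suc i) else if q = l then M (Suc i) 0 else 0))"

fun unpeel :: "nat \<Rightarrow> nat \<Rightarrow> (nat list \<times> nat list \<times> nat) \<times> matrix \<times> matrix \<times> matrix \<Rightarrow>
    matrix \<times> matrix \<times> matrix" where
  "unpeel k l ((x, y, d), M, R, C) =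
     (\<lambda>i t. if i = 0 then (if t = 0 then d else R k (t - 1))
            else if t = 0 then C l (i - 1) else M (i - 1) (t - 1),
      \<lambda>p t. if p < k then (if t = 0 then x ! p else R p (t - 1)) else 0,
      \<lambda>q i. if q < l then (if i = 0 then y ! q else C q (i - 1)) else 0)"

lemma drops_Suc: "drops (Suc m) M = (\<Sum>i<m. M (Suc i) 0) + drops m (\<lambda>i t. M (Suc i) (Suc t))"
proof -
  have "drops (Suc m) M = (\<Sum>i<m. \<Sum>t<Suc i. M (Suc i) t)"
    by (simp add: drops_def sum.lessThan_Suc_shift del: sum.lessThan_Suc)
  also have "\<dots> = (\<Sum>i<m. M (Suc i) 0 + (\<Sum>t<i. M (Suc i) (Suc t)))"
    by (simp add: sum.lessThan_Suc_shift del: sum.lessThan_Suc)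
  finally show ?thesis
    by (simp add: sum.distrib drops_def)
qed

lemma sum_list_map_upt: "sum_list (map f [0..<n]) = (\<Sum>i<n. f i)"
  by (simp add: interv_sum_list_conv_sum_set_nat atLeast0LessThan)

lemma peel_mem:
  assumes "(M, R, C) \<in> bordered_placements c (Suc m) (a, b, j)"
  shows "peel (length a) (length b) (M, R, C) \<in>
    (SIGMA ch:peel_choices c (a, b, j). bordered_placements c m (peeled c (a, b, j) ch))"
proof -
  let ?x = "map (\<lambda>p. R p 0) [0..<length a]" and ?y = "map (\<lambda>q. C q 0) [0..<length b]"
  let ?d = "M 0 0"
  from assms have M0: "\<And>i t. Suc m \<le> i \<or> Suc m \<le> t \<Longrightarrow> M i t = 0"
    and R: "R \<in> border (Suc m) a" and C: "C \<in> border (Suc m) b"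
    and col: "\<And>t. t < Suc m \<Longrightarrow> border_sum a R t + (\<Sum>i<Suc m. M i t) = c"
    and row: "\<And>i. i < Suc m \<Longrightarrow> border_sum b C i + (\<Sum>t<Suc m. M i t) = c"
    and drops: "drops (Suc m) M = j"
    by auto
  have R0: "R p t = 0" if "length a \<le> p \<or> Suc m \<le> t" for p t
    using R that by (auto simp: border_def)
  have C0: "C q t = 0" if "length b \<le> q \<or> Suc m \<le> t" for q t
    using C that by (auto simp: border_def)
  have R_row: "R p 0 + (\<Sum>t<m. R p (Suc t)) = a ! p" if "p < length a" for p
    using R that by (simp add: border_def sum.lessThan_Suc_shift del: sum.lessThan_Suc)
  have C_row: "C q 0 + (\<Sum>t<m. C q (Suc t)) = b ! q" if "q < length b" for q
    using C that by (simp add: border_def sum.lessThan_Suc_shift del: sum.lessThan_Suc)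
  have col0: "sum_list ?x + ?d + (\<Sum>i<m. M (Suc i) 0) = c"
    using col[of 0]
    by (simp add: sum_list_map_upt border_sum_def sum.lessThan_Suc_shift del: sum.lessThan_Suc)
  have row0: "sum_list ?y + ?d + (\<Sum>t<m. M 0 (Suc t)) = c"
    using row[of 0]
    by (simp add: sum_list_map_upt border_sum_def sum.lessThan_Suc_shift del: sum.lessThan_Suc)
  have R_rest: "(\<Sum>t<m. R p (Suc t)) = a ! p - R p 0" if "p < length a" for p
    using R_row[OF that] by simp
  have C_rest: "(\<Sum>t<m. C q (Suc t)) = b ! q - C q 0" if "q < length b" for q
    using C_row[OF that] by simp
  have "\<forall>p<length a. R p 0 \<le> a ! p" "\<forall>q<length b. C q 0 \<le> b ! q"
    using R_row C_row le_add1 by metis+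
  with col0 row0 drops have "(?x, ?y, ?d) \<in> peel_choices c (a, b, j)"
    by (auto simp: list_all2_conv_all_nth drops_Suc)
  moreover
  let ?a' = "map2 (-) a ?x @ [c - ?d - sum_list ?y]"
    and ?b' = "map2 (-) b ?y @ [c - ?d - sum_list ?x]"
  let ?R' = "\<lambda>p t. if p < length a then R p (Suc t) else if p = length a then M 0 (Suc t) else 0"
  let ?C' = "\<lambda>q i. if q < length b then C q (Suc i) else if q = length b then M (Suc i) 0 else 0"
  have "?R' \<in> border m ?a'"
    using R0 R_rest row0 M0 by (auto simp: border_def nth_append)
  moreover have "?C' \<in> border m ?b'"
    using C0 C_rest col0 M0 by (auto simp: border_def nth_append)
  moreover have "border_sum ?a' ?R' t = border_sum a R (Suc t) + M 0 (Suc t)" for t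
    by (simp add: border_sum_def)
  moreover have "border_sum ?b' ?C' i = border_sum b C (Suc i) + M (Suc i) 0" for i
    by (simp add: border_sum_def)
  moreover have "border_sum a R (Suc t) + M 0 (Suc t) + (\<Sum>i<m. M (Suc i) (Suc t)) = c"
    if "t < m" for t
    using col[of "Suc t"] that by (simp add: sum.lessThan_Suc_shift del: sum.lessThan_Suc)
  moreover have "border_sum b C (Suc i) + M (Suc i) 0 + (\<Sum>t<m. M (Suc i) (Suc t)) = c"
    if "i < m" for i
    using row[of "Suc i"] that by (simp add: sum.lessThan_Suc_shift del: sum.lessThan_Suc)
  moreover have "drops m (\<lambda>i t. M (Suc i) (Suc t)) = j - (c - ?d - sum_list ?x)"
    using col0 drops by (simp add: drops_Suc)
  ultimately show ?thesis
    using M0 by (simp del: peel_choices.simps)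
qed

lemma unpeel_mem:
  assumes ch: "(x, y, d) \<in> peel_choices c (a, b, j)"
    and mem: "(M, R, C) \<in> bordered_placements c m (peeled c (a, b, j) (x, y, d))"
  shows "unpeel (length a) (length b) ((x, y, d), M, R, C) \<in>
    bordered_placements c (Suc m) (a, b, j)"
proof -
  let ?k = "length a" and ?l = "length b"
  from ch have x: "length x = ?k" "\<And>p. p < ?k \<Longrightarrow> x ! p \<le> a ! p"
    and y: "length y = ?l" "\<And>q. q < ?l \<Longrightarrow> y ! q \<le> b ! q"
    and bounds: "sum_list x + d \<le> c" "sum_list y + d \<le> c" "c - d - sum_list x \<le> j"
    by (auto simp: list_all2_conv_all_nth)
  from mem x y have M0: "\<And>i t. m \<le> i \<or> m \<le> t \<Longrightarrow> M i t = 0"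
    and R: "R \<in> border m (map2 (-) a x @ [c - d - sum_list y])"
    and C: "C \<in> border m (map2 (-) b y @ [c - d - sum_list x])"
    and col: "\<And>t. t < m \<Longrightarrow> border_sum a R t + R ?k t + (\<Sum>i<m. M i t) = c"
    and row: "\<And>i. i < m \<Longrightarrow> border_sum b C i + C ?l i + (\<Sum>t<m. M i t) = c"
    and drops: "drops m M = j - (c - d - sum_list x)"
    by (auto simp: border_sum_def)
  from R x have R0: "\<And>p t. Suc ?k \<le> p \<or> m \<le> t \<Longrightarrow> R p t = 0"
    and R_row: "\<And>p. p < ?k \<Longrightarrow> (\<Sum>t<m. R p t) = a ! p - x ! p"
    and R_new: "(\<Sum>t<m. R ?k t) = c - d - sum_list y"
    by (auto simp: border_def nth_append)
  from C y have C0: "\<And>q i. Suc ?l \<le> q \<or> m \<le> i \<Longrightarrow> C q i = 0"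
    and C_row: "\<And>q. q < ?l \<Longrightarrow> (\<Sum>i<m. C q i) = b ! q - y ! q"
    and C_new: "(\<Sum>i<m. C ?l i) = c - d - sum_list x"
    by (auto simp: border_def nth_append)
  have sum_x: "sum_list x = (\<Sum>p<?k. x ! p)" and sum_y: "sum_list y = (\<Sum>q<?l. y ! q)"
    using x(1) y(1) by (simp_all add: sum_list_sum_nth atLeast0LessThan)
  let ?M = "\<lambda>i t. if i = 0 then (if t = 0 then d else R ?k (t - 1))
    else if t = 0 then C ?l (i - 1) else M (i - 1) (t - 1)"
  let ?R = "\<lambda>p t. if p < ?k then (if t = 0 then x ! p else R p (t - 1)) else 0"
  let ?C = "\<lambda>q i. if q < ?l then (if i = 0 then y ! q else C q (i - 1)) else 0"
  have "?R \<in> border (Suc m) a"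
    using R0 R_row x by (auto simp: border_def sum.lessThan_Suc_shift simp del: sum.lessThan_Suc)
  moreover have "?C \<in> border (Suc m) b"
    using C0 C_row y by (auto simp: border_def sum.lessThan_Suc_shift simp del: sum.lessThan_Suc)
  moreover have "border_sum a ?R t + (\<Sum>i<Suc m. ?M i t) = c" if "t < Suc m" for t
  proof (cases t)
    case 0
    then show ?thesis
      using C_new sum_x bounds
      by (simp add: border_sum_def sum.lessThan_Suc_shift del: sum.lessThan_Suc)
  next
    case (Suc t')
    then show ?thesis
      using col[of t'] that
      by (simp add: border_sum_def sum.lessThan_Suc_shift del: sum.lessThan_Suc)
  qed
  moreover have "border_sum b ?C i + (\<Sum>t<Suc m. ?M i t) = c" if "i < Suc m" for i
  proof (cases i)
    case 0
    then show ?thesis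
      using R_new sum_y bounds
      by (simp add: border_sum_def sum.lessThan_Suc_shift del: sum.lessThan_Suc)
  next
    case (Suc i')
    then show ?thesis
      using row[of i'] that
      by (simp add: border_sum_def sum.lessThan_Suc_shift del: sum.lessThan_Suc)
  qed
  moreover have "drops (Suc m) ?M = j"
    using C_new drops bounds by (simp add: drops_Suc)
  moreover have "?M i t = 0" if "Suc m \<le> i \<or> Suc m \<le> t" for i t
    using that by (auto intro!: R0 C0 M0)
  ultimately show ?thesis
    unfolding unpeel.simps bordered_placements.simps mem_Collect_eq prod.case by blast
qed

lemma unpeel_peel:
  assumes "(M, R, C) \<in> bordered_placements c (Suc m) (a, b, j)"
  shows "unpeel (length a) (length b) (peel (length a) (length b) (M, R, C)) = (M, R, C)"
proof -
  from assms have "R p t = 0" if "length a \<le> p" for p t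
    using that by (auto simp: border_def)
  moreover from assms have "C q i = 0" if "length b \<le> q" for q i
    using that by (auto simp: border_def)
  ultimately show ?thesis
    by (auto simp: fun_eq_iff split: nat.split)
qed

lemma peel_unpeel:
  assumes "(x, y, d) \<in> peel_choices c (a, b, j)"
    and "(M, R, C) \<in> bordered_placements c m (peeled c (a, b, j) (x, y, d))"
  shows "peel (length a) (length b) (unpeel (length a) (length b) ((x, y, d), M, R, C)) =
    ((x, y, d), M, R, C)"
proof -
  from assms(1) have "length x = length a" "length y = length b"
    by (auto dest: list_all2_lengthD)
  then have "map (\<lambda>p. if p < length a then x ! p else 0) [0..<length a] = x"
    and "map (\<lambda>q. if q < length b then y ! q else 0) [0..<length b] = y"
    by (auto intro!: nth_equalityI)
  moreover from assms have "R p t = 0" if "Suc (length a) \<le> p" for p t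
    using that by (auto simp: border_def)
  moreover from assms have "C q i = 0" if "Suc (length b) \<le> q" for q i
    using that by (auto simp: border_def)
  ultimately show ?thesis
    by (auto simp: fun_eq_iff cong: if_cong)
qed

lemma bij_betw_peel:
  "bij_betw (peel (length a) (length b)) (bordered_placements c (Suc m) (a, b, j))
     (SIGMA ch:peel_choices c (a, b, j). bordered_placements c m (peeled c (a, b, j) ch))"
  (is "bij_betw ?peel ?A ?B")
proof (rule bij_betw_byWitness[where f' = "unpeel (length a) (length b)"])
  show "\<forall>X\<in>?A. unpeel (length a) (length b) (?peel X) = X"
  proof
    fix X
    assume "X \<in> ?A"
    moreover obtain M R C where "X = (M, R, C)"
      by (cases X rule: prod_cases3)
    ultimately show "unpeel (length a) (length b) (?peel X) = X"
      using unpeel_peel by blast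
  qed
  show "?peel ` ?A \<subseteq> ?B"
  proof (rule image_subsetI)
    fix X
    assume "X \<in> ?A"
    moreover obtain M R C where "X = (M, R, C)"
      by (cases X rule: prod_cases3)
    ultimately show "?peel X \<in> ?B"
      using peel_mem by blast
  qed
  have unpeel_in: "unpeel (length a) (length b) Y \<in> ?A"
    and peel_unpeel_Y: "?peel (unpeel (length a) (length b) Y) = Y" if "Y \<in> ?B" for Y
  proof -
    obtain x y d M R C where Y: "Y = ((x, y, d), M, R, C)"
      by (cases Y rule: prod_cases4) (metis prod_cases3)
    with that have "(x, y, d) \<in> peel_choices c (a, b, j)"
      and "(M, R, C) \<in> bordered_placements c m (peeled c (a, b, j) (x, y, d))"
      by simp_all
    then show "unpeel (length a) (length b) Y \<in> ?A" "?peel (unpeel (length a) (length b) Y) = Y"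
      unfolding Y by (rule unpeel_mem, rule peel_unpeel)
  qed
  show "\<forall>Y\<in>?B. ?peel (unpeel (length a) (length b) Y) = Y"
    using peel_unpeel_Y by blast
  show "unpeel (length a) (length b) ` ?B \<subseteq> ?A"
    using unpeel_in by blast
qed

fun bounded_vectors :: "nat list \<Rightarrow> nat list list" where
  "bounded_vectors [] = [[]]"
| "bounded_vectors (v # vs) =
    map (\<lambda>(u, us). u # us) (List.product [0..<Suc v] (bounded_vectors vs))"

lemma set_bounded_vectors: "set (bounded_vectors a) = {x. list_all2 (\<le>) x a}"
proof (induction a)
  case (Cons v vs)
  show ?case
  proof (intro set_eqI iffI)
    fix x
    assume "x \<in> set (bounded_vectors (v # vs))"
    with Cons.IH show "x \<in> {x. list_all2 (\<le>) x (v # vs)}"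
      by auto
  next
    fix x
    assume "x \<in> {x. list_all2 (\<le>) x (v # vs)}"
    then obtain u us where "x = u # us" "u \<le> v" "list_all2 (\<le>) us vs"
      by (auto simp: list_all2_Cons2)
    with Cons.IH show "x \<in> set (bounded_vectors (v # vs))"
      by force
  qed
qed simp

lemma distinct_bounded_vectors: "distinct (bounded_vectors a)"
proof (induction a)
  case (Cons v vs)
  have "inj_on (\<lambda>(u, us). u # us) (set (List.product [0..<Suc v] (bounded_vectors vs)))"
    by (auto simp: inj_on_def)
  with Cons.IH show ?case
    by (simp add: distinct_map distinct_product)
qed simp

fun choice_list :: "nat \<Rightarrow> state \<Rightarrow> (nat list \<times> nat list \<times> nat) list" where
  "choice_list c (a, b, j) =
    filter (\<lambda>(x, y, d). sum_list x + d \<le> c \<and> sum_list y + d \<le> c \<and> c - d - sum_list x \<le> j)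
      (List.product (bounded_vectors a) (List.product (bounded_vectors b) [0..<Suc c]))"

lemma set_choice_list: "set (choice_list c s) = peel_choices c s"
  by (cases s) (auto simp: set_bounded_vectors)

lemma distinct_choice_list: "distinct (choice_list c s)"
  by (cases s) (simp add: distinct_bounded_vectors distinct_product)

definition next_state :: "nat \<Rightarrow> state \<Rightarrow> nat list \<times> nat list \<times> nat \<Rightarrow> state" where
  "next_state c s ch = drop_zero_quotas (peeled c s ch)"

fun bordered_count :: "nat \<Rightarrow> nat \<Rightarrow> state \<Rightarrow> nat" where
  "bordered_count c 0 (a, b, j) = (if (\<forall>v\<in>set a. v = 0) \<and> (\<forall>v\<in>set b. v = 0) \<and> j = 0 then 1 else 0)"
| "bordered_count c (Suc m) s = (\<Sum>ch\<leftarrow>choice_list c s. bordered_count c m (next_state c s ch))"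

lemma bordered_count_Suc:
  "bordered_count c (Suc m) s = (\<Sum>ch\<in>peel_choices c s. bordered_count c m (next_state c s ch))"
  by (simp add: sum_list_distinct_conv_sum_set distinct_choice_list flip: set_choice_list)

lemma bordered_placements_0:
  "bordered_placements c 0 (a, b, j) =
    (if (\<forall>v\<in>set a. v = 0) \<and> (\<forall>v\<in>set b. v = 0) \<and> j = 0 then {(\<lambda>_ _. 0, \<lambda>_ _. 0, \<lambda>_ _. 0)} else {})"
  by (auto simp: border_def drops_def fun_eq_iff all_set_conv_all_nth)

lemma eqpoll_card: "A \<approx> B \<Longrightarrow> card A = card B"
  unfolding eqpoll_def by (blast intro: bij_betw_same_card)

lemma finite_card_bordered_placements:
  "finite (bordered_placements c m s) \<and> card (bordered_placements c m s) = bordered_count c m s"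
proof (induction m arbitrary: s)
  case 0
  then show ?case
    by (cases s) (simp add: bordered_placements_0 del: bordered_placements.simps)
next
  case (Suc m)
  obtain a b j where s: "s = (a, b, j)"
    by (cases s rule: prod_cases3)
  let ?B = "\<lambda>ch. bordered_placements c m (peeled c s ch)"
  have B: "finite (?B ch) \<and> card (?B ch) = bordered_count c m (next_state c s ch)" for ch
    using Suc.IH[of "next_state c s ch"] bordered_placements_drop_zero_quotas[of c m "peeled c s ch"]
    by (simp add: next_state_def eqpoll_finite_iff eqpoll_card)
  have fin: "finite (peel_choices c s)"
    by (metis List.finite_set set_choice_list)
  have bij: "bij_betw (peel (length a) (length b)) (bordered_placements c (Suc m) s)
      (Sigma (peel_choices c s) ?B)"
    unfolding s by (rule bij_betw_peel)
  then have "card (bordered_placements c (Suc m) s) = (\<Sum>ch\<in>peel_choices c s. card (?B ch))"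
    using fin B by (simp add: bij_betw_same_card card_SigmaI)
  with bij fin B show ?case
    by (simp add: bordered_count_Suc bij_betw_finite del: bordered_count.simps(2))
qed

lemma bordered_count_gen_eulerian: "bordered_count c n ([], [], j) = gen_eulerian c n j"
  using finite_card_bordered_placements card_bordered_placements_Nil by metis

subsection \<open>Linear recurrences from a closed set of states\<close>

definition closed_states :: "nat \<Rightarrow> state list \<Rightarrow> bool" where
  "closed_states c S \<longleftrightarrow> (\<forall>s\<in>set S. \<forall>ch\<in>set (choice_list c s). next_state c s ch \<in> set S)"

lemma bordered_count_recurrence:
  fixes p :: "'a::comm_ring_1 poly"
  assumes closed: "closed_states c S"
    and init: "\<forall>s\<in>set S. (\<Sum>i\<le>degree p. coeff p i * of_nat (bordered_count c (degree p - i) s)) = 0"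
    and s: "s \<in> set S"
  shows "(\<Sum>i\<le>degree p. coeff p i * of_nat (bordered_count c (n + degree p - i) s)) = 0"
  using s
proof (induction n arbitrary: s)
  case 0
  with init show ?case
    by simp
next
  case (Suc n)
  have "(\<Sum>i\<le>degree p. coeff p i * of_nat (bordered_count c (Suc n + degree p - i) s)) =
      (\<Sum>i\<le>degree p. \<Sum>ch\<in>peel_choices c s.
        coeff p i * of_nat (bordered_count c (n + degree p - i) (next_state c s ch)))"
    by (intro sum.cong) (simp_all add: Suc_diff_le bordered_count_Suc sum_distrib_left
      del: bordered_count.simps(2))
  also have "\<dots> = (\<Sum>ch\<in>peel_choices c s. \<Sum>i\<le>degree p.
        coeff p i * of_nat (bordered_count c (n + degree p - i) (next_state c s ch)))"
    by (rule sum.swap)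
  also have "\<dots> = 0"
    using Suc closed by (simp add: closed_states_def flip: set_choice_list)
  finally show ?case .
qed

fun index_of :: "'a list \<Rightarrow> 'a \<Rightarrow> nat" where
  "index_of [] x = 0"
| "index_of (y # ys) x = (if y = x then 0 else Suc (index_of ys x))"

lemma index_of_less: "x \<in> set xs \<Longrightarrow> index_of xs x < length xs"
  by (induction xs) auto

lemma nth_index_of: "x \<in> set xs \<Longrightarrow> xs ! index_of xs x = x"
  by (induction xs) auto

text \<open>The transfer matrix, stored as adjacency lists of positions in \<open>S\<close>. Count vectors have
  integer entries, which \<open>code_simp\<close> evaluates far faster than natural numbers.\<close>
definition transfer_table :: "nat \<Rightarrow> state list \<Rightarrow> nat list list" where
  "transfer_table c S = map (\<lambda>s. map (\<lambda>ch. index_of S (next_state c s ch)) (choice_list c s)) S"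

definition count_step :: "nat list list \<Rightarrow> int list \<Rightarrow> int list" where
  "count_step T v = map (\<lambda>is. \<Sum>i\<leftarrow>is. v ! i) T"

fun iterates :: "('a \<Rightarrow> 'a) \<Rightarrow> nat \<Rightarrow> 'a \<Rightarrow> 'a list" where
  "iterates f 0 x = [x]"
| "iterates f (Suc n) x = x # iterates f n (f x)"

lemma nth_iterates: "k \<le> n \<Longrightarrow> iterates f n x ! k = (f ^^ k) x"
proof (induction n arbitrary: k x)
  case (Suc n)
  then show ?case
    by (cases k) (simp_all add: funpow_swap1)
qed simp

lemma count_step_transfer_table:
  assumes "closed_states c S"
  shows "count_step (transfer_table c S) (map (\<lambda>s. int (bordered_count c m s)) S) =
    map (\<lambda>s. int (bordered_count c (Suc m) s)) S"
proof -
  have "map (\<lambda>s. int (bordered_count c m s)) S ! index_of S (next_state c s ch) =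
      int (bordered_count c m (next_state c s ch))"
    if "s \<in> set S" "ch \<in> set (choice_list c s)" for s ch
  proof -
    from assms that have "next_state c s ch \<in> set S"
      unfolding closed_states_def by blast
    then show ?thesis
      by (simp add: index_of_less nth_index_of)
  qed
  then show ?thesis
    by (simp add: count_step_def transfer_table_def comp_def cong: map_cong flip: sum_list_of_nat)
qed

lemma bordered_count_iterates:
  assumes "closed_states c S" and "s \<in> set S" and "k \<le> n"
  shows "int (bordered_count c k s) =
    iterates (count_step (transfer_table c S)) n (map (\<lambda>s. int (bordered_count c 0 s)) S)
      ! k ! index_of S s"
proof -
  have "(count_step (transfer_table c S) ^^ k) (map (\<lambda>s. int (bordered_count c 0 s)) S) =
      map (\<lambda>s. int (bordered_count c k s)) S"
    by (induction k) (simp_all add: count_step_transfer_table[OF assms(1)]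
      del: bordered_count.simps)
  with assms show ?thesis
    by (simp add: nth_iterates nth_index_of index_of_less del: bordered_count.simps)
qed

lemma fps_of_poly_mult_Abs_fps:
  fixes p :: "'a::comm_ring_1 poly"
  assumes "\<And>n. (\<Sum>i\<le>degree p. coeff p i * f (n + degree p - i)) = 0"
  shows "fps_of_poly p * Abs_fps f =
    fps_of_poly (Poly (map (\<lambda>n. \<Sum>i\<le>n. coeff p i * f (n - i)) [0..<degree p]))"
proof (rule fps_ext)
  fix n
  have lhs: "fps_nth (fps_of_poly p * Abs_fps f) n = (\<Sum>i\<le>n. coeff p i * f (n - i))"
    by (simp add: fps_mult_nth atLeast0AtMost)
  show "fps_nth (fps_of_poly p * Abs_fps f) n =
    fps_nth (fps_of_poly (Poly (map (\<lambda>n. \<Sum>i\<le>n. coeff p i * f (n - i)) [0..<degree p]))) n"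
  proof (cases "n < degree p")
    case True
    with lhs show ?thesis
      by (simp add: nth_default_def)
  next
    case False
    then obtain k where n: "n = k + degree p"
      by (metis add.commute le_Suc_ex not_less)
    have "(\<Sum>i\<le>n. coeff p i * f (n - i)) = (\<Sum>i\<le>degree p. coeff p i * f (n - i))"
      using n by (intro sum.mono_neutral_right) (auto simp: coeff_eq_0)
    also have "\<dots> = 0"
      using assms[of k] n by simp
    finally show ?thesis
      using False lhs by (simp add: nth_default_def)
  qed
qed

subsection \<open>The case of three rooks per line and three drops\<close>

text \<open>The states reachable from \<open>([], [], 3)\<close>.\<close>
definition states_3_3 :: "state list" where
  "states_3_3 = [([], [], 3), ([3], [3], 0), ([2], [2], 1), ([1], [1], 2), ([2, 1], [3], 0),
    ([2], [2], 0), ([1, 2], [3], 0), ([1, 1], [2], 0), ([1], [1], 0), ([], [], 0),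
    ([2, 1], [2, 1], 0), ([2], [1, 1], 0), ([1, 2], [2, 1], 0), ([1, 1], [2], 1),
    ([1, 1], [1, 1], 0), ([1], [1], 1), ([3], [2, 1], 0), ([], [], 1), ([1, 2], [1, 2], 0),
    ([1, 1], [1, 1], 1), ([3], [1, 2], 0), ([2], [1, 1], 1), ([], [], 2), ([1, 1, 1], [3], 0),
    ([1, 1, 1], [2, 1], 0), ([1, 1, 1], [1, 2], 0), ([2, 1], [1, 2], 0), ([1, 1, 1], [1, 1, 1], 0),
    ([1, 2], [1, 1, 1], 0), ([3], [1, 1, 1], 0), ([2, 1], [1, 1, 1], 0)]"

definition denominator_3_3 :: "rat poly" where
  "denominator_3_3 = (1 - [:0, 1:])^4 * (1 - 2*[:0, 1:])^3 * (1 - 5*[:0, 1:] + 5*[:0, 1:]^2)^2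
     * (1 - 10*[:0, 1:] + 27*[:0, 1:]^2 - 20*[:0, 1:]^3)"

definition numerator_3_3 :: "rat poly" where
  "numerator_3_3 = monom 1 2 - monom 7 3 + monom 39 4 - monom 336 5 + monom 1844 6 - monom 5545 7
     + monom 9697 8 - monom 10404 9 + monom 7532 10 - monom 4558 11 + monom 2435 12 - monom 700 13"

lemma fps_of_poly_denominator_3_3:
  "(1 - fps_X)^4 * (1 - 2*fps_X)^3 * (1 - 5*fps_X + 5*fps_X^2)^2
    * (1 - 10*fps_X + 27*fps_X^2 - 20*fps_X^3) = (fps_of_poly denominator_3_3 :: rat fps)"
  unfolding denominator_3_3_def
  by (simp only: fps_of_poly_mult fps_of_poly_power fps_of_poly_diff fps_of_poly_add fps_of_poly_1
    fps_of_poly_numeral fps_of_poly_fps_X)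

lemma fps_of_poly_numerator_3_3:
  "fps_X^2 - 7*fps_X^3 + 39*fps_X^4 - 336*fps_X^5 + 1844*fps_X^6 - 5545*fps_X^7 + 9697*fps_X^8
    - 10404*fps_X^9 + 7532*fps_X^10 - 4558*fps_X^11 + 2435*fps_X^12 - 700*fps_X^13
    = (fps_of_poly numerator_3_3 :: rat fps)"
  unfolding numerator_3_3_def
  by (simp only: fps_of_poly_diff fps_of_poly_add fps_of_poly_monom' fps_of_poly_monom
    fps_numeral_fps_const fps_const_1_eq_1 mult_1)

lemma coeffs_denominator_3_3:
  "coeffs denominator_3_3 = [1, -30, 404, -3246, 17423, -66214, 184037, -380592, 589248, -680496,
     577675, -349910, 143100, -35400, 4000]"
  unfolding denominator_3_3_def by code_simp

lemma degree_denominator_3_3: "degree denominator_3_3 = 14"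
  by (simp add: degree_eq_length_coeffs coeffs_denominator_3_3)

lemma closed_states_3_3: "closed_states 3 states_3_3"
  by code_simp

lemma bordered_count_3_3_iterates:
  assumes "s \<in> set states_3_3" and "k \<le> degree denominator_3_3"
  shows "(of_nat (bordered_count 3 k s) :: rat) =
    of_int (iterates (count_step (transfer_table 3 states_3_3)) (degree denominator_3_3)
      (map (\<lambda>s. int (bordered_count 3 0 s)) states_3_3) ! k ! index_of states_3_3 s)"
  using bordered_count_iterates[OF closed_states_3_3 assms] by (metis of_int_of_nat_eq)

lemma bordered_count_3_3_recurrence:
  assumes "s \<in> set states_3_3"
  shows "(\<Sum>i\<le>degree denominator_3_3. coeff denominator_3_3 i *
    of_nat (bordered_count 3 (n + degree denominator_3_3 - i) s)) = 0"
proof (rule bordered_count_recurrence[OF closed_states_3_3 _ assms])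
  have "\<forall>s\<in>set states_3_3. (\<Sum>i\<le>degree denominator_3_3. nth_default 0 (coeffs denominator_3_3) i *
      of_int (iterates (count_step (transfer_table 3 states_3_3)) (degree denominator_3_3)
        (map (\<lambda>s. int (bordered_count 3 0 s)) states_3_3) ! (degree denominator_3_3 - i)
        ! index_of states_3_3 s)) = 0"
    unfolding coeffs_denominator_3_3 degree_denominator_3_3 by code_simp
  then show "\<forall>s\<in>set states_3_3. (\<Sum>i\<le>degree denominator_3_3. coeff denominator_3_3 i *
      of_nat (bordered_count 3 (degree denominator_3_3 - i) s)) = 0"
    by (simp add: nth_default_coeffs_eq bordered_count_3_3_iterates)
qed

lemma initial_terms_3_3:
  "Poly (map (\<lambda>n. \<Sum>i\<le>n. coeff denominator_3_3 i * of_nat (bordered_count 3 (n - i) ([], [], 3)))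
     [0..<degree denominator_3_3]) = numerator_3_3"
proof -
  let ?vs = "iterates (count_step (transfer_table 3 states_3_3)) (degree denominator_3_3)
    (map (\<lambda>s. int (bordered_count 3 0 s)) states_3_3)"
  have "map (\<lambda>n. \<Sum>i\<le>n. nth_default 0 (coeffs denominator_3_3) i * of_int (?vs ! (n - i) ! 0))
      [0..<degree denominator_3_3] = coeffs numerator_3_3"
    unfolding coeffs_denominator_3_3 degree_denominator_3_3 numerator_3_3_def by code_simp
  moreover have
    "(of_nat (bordered_count 3 (n - i) ([], [], 3)) :: rat) = of_int (?vs ! (n - i) ! 0)"
    if "n < degree denominator_3_3" for n i
    using bordered_count_3_3_iterates[of "([], [], 3)" "n - i"] that by (simp add: states_3_3_def)
  then have "map (\<lambda>n. \<Sum>i\<le>n. coeff denominator_3_3 i * of_nat (bordered_count 3 (n - i) ([], [], 3)))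
      [0..<degree denominator_3_3] =
    map (\<lambda>n. \<Sum>i\<le>n. nth_default 0 (coeffs denominator_3_3) i * of_int (?vs ! (n - i) ! 0))
      [0..<degree denominator_3_3]"
    by (intro map_cong refl sum.cong) (simp_all add: nth_default_coeffs_eq)
  ultimately show ?thesis
    by simp
qed

theorem mainTheorem10:
  shows "(Abs_fps (\<lambda>n. of_nat (gen_eulerian 3 n 3)) :: rat fps) =
    (fps_X^2 - 7*fps_X^3 + 39*fps_X^4 - 336*fps_X^5 + 1844*fps_X^6 - 5545*fps_X^7
      + 9697*fps_X^8 - 10404*fps_X^9 + 7532*fps_X^10 - 4558*fps_X^11 + 2435*fps_X^12
      - 700*fps_X^13)
    / ((1 - fps_X)^4 * (1 - 2*fps_X)^3 * (1 - 5*fps_X + 5*fps_X^2)^2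
       * (1 - 10*fps_X + 27*fps_X^2 - 20*fps_X^3))"
proof -
  let ?F = "Abs_fps (\<lambda>n. of_nat (bordered_count 3 n ([], [], 3))) :: rat fps"
  have "([], [], 3) \<in> set states_3_3"
    by (simp add: states_3_3_def)
  then have "fps_of_poly denominator_3_3 * ?F = fps_of_poly numerator_3_3"
    using fps_of_poly_mult_Abs_fps[OF bordered_count_3_3_recurrence] initial_terms_3_3 by simp
  moreover have "fps_of_poly denominator_3_3 \<noteq> (0 :: rat fps)"
    using degree_denominator_3_3 by auto
  ultimately have "?F = fps_of_poly numerator_3_3 / fps_of_poly denominator_3_3"
    by (metis nonzero_mult_div_cancel_left)
  then show ?thesis
    unfolding fps_of_poly_denominator_3_3 fps_of_poly_numerator_3_3
    by (simp add: bordered_count_gen_eulerian)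
qed

end
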